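(* Each of the semantics $\mathit{stg}$, $\mathit{tfstg2}$ and $\mathit{stg1.5}$ fails to be $\preceq^E_\cap$-skepticism adequate and fails to be $\preceq^E_W$-skepticism adequate.
   Context: An argumentation framework (AF) is $\mathcal{F}=(A_{\mathcal{F}},R_{\mathcal{F}})$ with $R_{\mathcal{F}}\subseteq A_{\mathcal{F}}\times A_{\mathcal{F}}$; $a\rightarrow b$ means $(a,b)\in R_{\mathcal{F}}$. $\mathrm{conf}(\mathcal{F})=\{(x,y):(x,y)\in R_{\mathcal{F}}\text{ or }(y,x)\in R_{\mathcal{F}}\}$. $\tau_1\preceq^E_\cap\tau_2$ iff $\bigcap_{S_1\in\tau_1}S_1\subseteq\bigcap_{S_2\in\tau_2}S_2$; $\tau_1\preceq^E_W\tau_2$ iff for every $S_2\in\tau_2$ there is $S_1\in\tau_1$ with $S_1\subseteq S_2$. A semantics $\sigma$ is $\preceq$-skepticism adequate if for any AFs $\mathcal{F},\mathcal{G}$ on the same argument set with $R_{\mathcal{F}}\supseteq R_{\mathcal{G}}$ and $\mathrm{conf}(\mathcal{F})=\mathrm{conf}(\mathcal{G})$, $\sigma(\mathcal{F})\preceq\sigma(\mathcal{G})$. $\mathcal{F}|_B=(A_{\mathcal{F}}\cap B,R_{\mathcal{F}}\cap(B\times B))$. Conflict-free: no $a,b\in S$ with $a\rightarrow b$; $S^\oplus=S\cup\{x:\exists y\in S,\ y\rightarrow x\}$; $\mathit{stg}(\mathcal{F})$: conflict-free $S$ with no conflict-free $T$ such that $S^\oplus\subsetneq T^\oplus$. $\mathrm{SCC}(a)$: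 set of $b$ with directed attack paths (possibly of length 0) from $a$ to $b$ and back. $D_S(X)=\{b\in X:\exists a\in S\setminus X,\ a\rightarrow b\}$. $\mathit{tfstg2}$: $C^0_S(a)=\mathrm{SCC}(a)$; $C^{\alpha+1}_S(a)$ = component of $a$ in $\mathcal{F}|_{C^\alpha_S(a)\setminus D_S(C^\alpha_S(a))}$; for limit $\lambda$, component of $a$ in $\mathcal{F}|_{\bigcap_{\alpha<\lambda}C^\alpha_S(a)}$; $\alpha_S(a)$ = least $\alpha$ with $a\notin C^\alpha_S(a)$ or $C^{\alpha+1}_S(a)=C^\alpha_S(a)$; $S\in\mathit{tfstg2}(\mathcal{F})$ iff conflict-free and for each $a$, $a\notin C^{\alpha_S(a)}_S(a)$ or $S\cap C^{\alpha_S(a)}_S(a)$ is a stage extension of $\mathcal{F}|_{C^{\alpha_S(a)}_S(a)}$. $\mathit{stg1.5}$: $S$ conflict-free and for each strongly connected component $X$ of $\mathcal{F}$, $S\cap X$ is a stage extension of $\mathcal{F}|_{X\setminus D_S(X)}$. *)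

theory Defs
  imports Main
begin

type_synonym 'a af = "'a set \<times> ('a \<times> 'a) set"

definition is_AF :: "'a af \<Rightarrow> bool" where
  "is_AF F \<longleftrightarrow> snd F \<subseteq> fst F \<times> fst F"

definition conf :: "'a af \<Rightarrow> ('a \<times> 'a) set" where
  "conf F = {(x, y). (x, y) \<in> snd F \<or> (y, x) \<in> snd F}"

definition restr :: "'a af \<Rightarrow> 'a set \<Rightarrow> 'a af" where
  "restr F B = (fst F \<inter> B, snd F \<inter> (B \<times> B))"

definition conflict_free :: "'a af \<Rightarrow> 'a set \<Rightarrow> bool" where
  "conflict_free F S \<longleftrightarrow> S \<subseteq> fst F \<and> (\<forall>a\<in>S. \<forall>b\<in>S. (a, b) \<notin> snd F)"

definition range_af :: "'a af \<Rightarrow> 'a set \<Rightarrow> 'a set" where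
  "range_af F S = S \<union> {x. \<exists>y\<in>S. (y, x) \<in> snd F}"

definition stg :: "'a af \<Rightarrow> 'a set set" where
  "stg F = {S. conflict_free F S \<and>
              \<not> (\<exists>T. conflict_free F T \<and> range_af F S \<subset> range_af F T)}"

text \<open>Strongly connected component of a (empty if a is not an argument).\<close>
definition scc :: "'a af \<Rightarrow> 'a \<Rightarrow> 'a set" where
  "scc F a = {b \<in> fst F. (a, b) \<in> (snd F)\<^sup>* \<and> (b, a) \<in> (snd F)\<^sup>*}"

definition sccs :: "'a af \<Rightarrow> 'a set set" where
  "sccs F = scc F ` fst F"

definition D_S :: "'a af \<Rightarrow> 'a set \<Rightarrow> 'a set \<Rightarrow> 'a set" where
  "D_S F S X = {b \<in> X. \<exists>a \<in> S - X. (a, b) \<in> snd F}"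

text \<open>The transfinite sequence C^alpha_S(a): the set of all its stages is the least set
  containing SCC(a) that is closed under the successor step and under the limit step
  (applied to nonempty chains of stages).\<close>
inductive_set tf_stages :: "'a af \<Rightarrow> 'a set \<Rightarrow> 'a \<Rightarrow> 'a set set"
  for F :: "'a af" and S :: "'a set" and a :: 'a where
  base: "scc F a \<in> tf_stages F S a"
| succ: "X \<in> tf_stages F S a \<Longrightarrow> scc (restr F (X - D_S F S X)) a \<in> tf_stages F S a"
| lim: "(\<And>Z. Z \<in> Y \<Longrightarrow> Z \<in> tf_stages F S a) \<Longrightarrow> Y \<noteq> {} \<Longrightarrow> Complete_Partial_Order.chain (\<subseteq>) Y \<Longrightarrow>
        scc (restr F (\<Inter>Y)) a \<in> tf_stages F S a"

text \<open>The decreasing sequence stabilises; its final value is the intersection of all stages.\<close>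
definition tf_final :: "'a af \<Rightarrow> 'a set \<Rightarrow> 'a \<Rightarrow> 'a set" where
  "tf_final F S a = \<Inter> (tf_stages F S a)"

definition tfstg2 :: "'a af \<Rightarrow> 'a set set" where
  "tfstg2 F = {S. conflict_free F S \<and>
     (\<forall>a \<in> fst F. a \<notin> tf_final F S a \<or>
                  S \<inter> tf_final F S a \<in> stg (restr F (tf_final F S a)))}"

definition stg15 :: "'a af \<Rightarrow> 'a set set" where
  "stg15 F = {S. conflict_free F S \<and>
     (\<forall>X \<in> sccs F. S \<inter> X \<in> stg (restr F (X - D_S F S X)))}"

definition le_cap :: "'a set set \<Rightarrow> 'a set set \<Rightarrow> bool" where
  "le_cap t1 t2 \<longleftrightarrow> \<Inter> t1 \<subseteq> \<Inter> t2"

definition le_W :: "'a set set \<Rightarrow> 'a set set \<Rightarrow> bool" where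
  "le_W t1 t2 \<longleftrightarrow> (\<forall>S2 \<in> t2. \<exists>S1 \<in> t1. S1 \<subseteq> S2)"

definition skept_adequate ::
  "('a set set \<Rightarrow> 'a set set \<Rightarrow> bool) \<Rightarrow> ('a af \<Rightarrow> 'a set set) \<Rightarrow> bool" where
  "skept_adequate le \<sigma> \<longleftrightarrow>
     (\<forall>F G. is_AF F \<and> is_AF G \<and> fst F = fst G \<and> snd G \<subseteq> snd F \<and> conf F = conf G
        \<longrightarrow> le (\<sigma> F) (\<sigma> G))"

end

theory Submission
  imports Defs
begin

text \<open>Let G be the odd cycle 0 \<rightarrow> 1 \<rightarrow> 2 \<rightarrow> 0 and let F add the attack 1 \<rightarrow> 0, which
  creates no new conflict. In F the argument 1 attacks everything else, so stage extensions have
  full range, and a conflict-free set of full range must contain 1. In the odd cycle G no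
  conflict-free set has full range, so {0}, whose range misses only 2, is a stage extension.
  Hence 1 is skeptically accepted in F but not in G, against both orderings. Both frameworks are
  strongly connected, and on such frameworks tfstg2 and stg1.5 coincide with stg.\<close>

definition strongly_connected :: "'a af \<Rightarrow> bool" where
  "strongly_connected F \<longleftrightarrow> (\<forall>a \<in> fst F. \<forall>b \<in> fst F. (a, b) \<in> (snd F)\<^sup>*)"

lemma strongly_connected_mono:
  assumes "strongly_connected G" "fst F = fst G" "snd G \<subseteq> snd F"
  shows "strongly_connected F"
  using assms rtrancl_mono unfolding strongly_connected_def by blast

lemma scc_strongly_connected:
  "strongly_connected F \<Longrightarrow> a \<in> fst F \<Longrightarrow> scc F a = fst F"
  unfolding strongly_connected_def scc_def by auto

lemma restr_arguments: "is_AF F \<Longrightarrow> restr F (fst F) = F"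
  unfolding is_AF_def restr_def by (cases F) auto

lemma D_S_arguments_empty: "is_AF F \<Longrightarrow> D_S F S (fst F) = {}"
  unfolding is_AF_def D_S_def by auto

lemma conflict_free_subset_arguments: "conflict_free F S \<Longrightarrow> S \<subseteq> fst F"
  unfolding conflict_free_def by simp

lemma stg_conflict_free: "S \<in> stg F \<Longrightarrow> conflict_free F S"
  unfolding stg_def by simp

lemma tf_stages_strongly_connected:
  assumes af: "is_AF F" and sc: "strongly_connected F" and a: "a \<in> fst F"
  shows "tf_stages F S a = {fst F}"
proof
  have scc_a: "scc F a = fst F"
    using scc_strongly_connected[OF sc a] .
  show "tf_stages F S a \<subseteq> {fst F}"
  proof
    fix X assume "X \<in> tf_stages F S a"
    then show "X \<in> {fst F}"
    proof (induction rule: tf_stages.induct)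
      case base
      show ?case using scc_a by simp
    next
      case (succ X)
      then show ?case using scc_a restr_arguments[OF af] D_S_arguments_empty[OF af] by simp
    next
      case (lim Y)
      then have "Y = {fst F}" by auto
      then show ?case using scc_a restr_arguments[OF af] by simp
    qed
  qed
  show "{fst F} \<subseteq> tf_stages F S a"
    using tf_stages.base[of F a S] scc_a by simp
qed

lemma tfstg2_strongly_connected:
  assumes af: "is_AF F" and sc: "strongly_connected F" and ne: "fst F \<noteq> {}"
  shows "tfstg2 F = stg F"
proof -
  have final: "tf_final F S a = fst F" if "a \<in> fst F" for S a
    using tf_stages_strongly_connected[OF af sc that] unfolding tf_final_def by simp
  have "S \<in> tfstg2 F \<longleftrightarrow> conflict_free F S \<and> S \<in> stg F" for S
  proof -
    have "S \<inter> fst F = S" if "conflict_free F S"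
      using conflict_free_subset_arguments[OF that] by blast
    then show ?thesis
      using ne unfolding tfstg2_def by (auto simp: final restr_arguments[OF af])
  qed
  then show ?thesis
    using stg_conflict_free by blast
qed

lemma stg15_strongly_connected:
  assumes af: "is_AF F" and sc: "strongly_connected F" and ne: "fst F \<noteq> {}"
  shows "stg15 F = stg F"
proof -
  have sccs: "sccs F = {fst F}"
    unfolding sccs_def using scc_strongly_connected[OF sc] ne by auto
  have "S \<in> stg15 F \<longleftrightarrow> conflict_free F S \<and> S \<in> stg F" for S
  proof -
    have "S \<inter> fst F = S" if "conflict_free F S"
      using conflict_free_subset_arguments[OF that] by blast
    then show ?thesis
      unfolding stg15_def
      by (auto simp: sccs D_S_arguments_empty[OF af] restr_arguments[OF af])
  qed
  then show ?thesis
    using stg_conflict_free by blast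
qed

lemma range_af_subset_arguments:
  "is_AF F \<Longrightarrow> conflict_free F S \<Longrightarrow> range_af F S \<subseteq> fst F"
  unfolding is_AF_def conflict_free_def range_af_def by auto

lemma stg_range_full_if_stable_exists:
  assumes "is_AF F" "conflict_free F T" "range_af F T = fst F" "S \<in> stg F"
  shows "range_af F S = fst F"
  using assms range_af_subset_arguments[OF assms(1)] unfolding stg_def by blast

lemma stg_if_range_misses_one:
  assumes af: "is_AF F" and cf: "conflict_free F S"
    and misses: "fst F = insert x (range_af F S)"
    and no_stable: "\<And>T. conflict_free F T \<Longrightarrow> range_af F T \<noteq> fst F"
  shows "S \<in> stg F"
proof -
  have "range_af F T = fst F" if "conflict_free F T" "range_af F S \<subset> range_af F T" for T
  proof -
    have "range_af F T \<subseteq> insert x (range_af F S)"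
      using range_af_subset_arguments[OF af that(1)] misses by simp
    then show ?thesis
      using that(2) misses by auto
  qed
  then show ?thesis
    using cf no_stable unfolding stg_def by blast
qed

lemma not_skept_adequate_if_counterexample:
  assumes "is_AF F" "is_AF G" "fst F = fst G" "snd G \<subseteq> snd F" "conf F = conf G"
    and "\<not> le (\<sigma> F) (\<sigma> G)"
  shows "\<not> skept_adequate le \<sigma>"
  using assms unfolding skept_adequate_def by blast

lemma not_le_cap_not_le_W_if_separated:
  assumes "\<And>S. S \<in> t1 \<Longrightarrow> x \<in> S" and "T \<in> t2" and "x \<notin> T"
  shows "\<not> le_cap t1 t2 \<and> \<not> le_W t1 t2"
  using assms unfolding le_cap_def le_W_def by blast

definition cycle3 :: "nat af" where
  "cycle3 = ({0, 1, 2}, {(0, 1), (1, 2), (2, 0)})"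

definition cycle3_mutual :: "nat af" where
  "cycle3_mutual = ({0, 1, 2}, {(0, 1), (1, 0), (1, 2), (2, 0)})"

lemma cycle3_mutual_refines_cycle3:
  "is_AF cycle3_mutual \<and> is_AF cycle3 \<and> fst cycle3_mutual = fst cycle3 \<and>
   snd cycle3 \<subseteq> snd cycle3_mutual \<and> conf cycle3_mutual = conf cycle3"
  unfolding is_AF_def cycle3_mutual_def cycle3_def conf_def by (intro conjI) auto

lemma strongly_connected_cycle3: "strongly_connected cycle3"
proof -
  have edges: "(0, 1) \<in> (snd cycle3)\<^sup>*" "(1, 2) \<in> (snd cycle3)\<^sup>*" "(2, 0) \<in> (snd cycle3)\<^sup>*"
    unfolding cycle3_def by auto
  then have "(0, 2) \<in> (snd cycle3)\<^sup>*" "(1, 0) \<in> (snd cycle3)\<^sup>*" "(2, 1) \<in> (snd cycle3)\<^sup>*"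
    by (meson rtrancl_trans)+
  with edges show ?thesis
    unfolding strongly_connected_def by (auto simp: cycle3_def)
qed

lemma strongly_connected_cycle3_mutual: "strongly_connected cycle3_mutual"
  using strongly_connected_mono[OF strongly_connected_cycle3] cycle3_mutual_refines_cycle3 by blast

lemma cycle3_no_full_range:
  assumes cf: "conflict_free cycle3 T"
  shows "range_af cycle3 T \<noteq> fst cycle3"
proof
  assume "range_af cycle3 T = fst cycle3"
  then have "0 \<in> range_af cycle3 T" "1 \<in> range_af cycle3 T" "2 \<in> range_af cycle3 T"
    unfolding cycle3_def by auto
  then have "0 \<in> T \<or> 2 \<in> T" "1 \<in> T \<or> 0 \<in> T" "2 \<in> T \<or> 1 \<in> T"
    unfolding range_af_def cycle3_def by auto
  moreover have "\<not> (0 \<in> T \<and> 1 \<in> T)" "\<not> (1 \<in> T \<and> 2 \<in> T)" "\<not> (2 \<in> T \<and> 0 \<in> T)"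
    using cf unfolding conflict_free_def cycle3_def by auto
  ultimately show False by blast
qed

lemma stg_cycle3: "{0} \<in> stg cycle3"
proof (rule stg_if_range_misses_one[where x = 2])
  show "is_AF cycle3"
    using cycle3_mutual_refines_cycle3 by blast
  show "conflict_free cycle3 {0}"
    unfolding conflict_free_def cycle3_def by simp
  show "fst cycle3 = insert 2 (range_af cycle3 {0})"
    unfolding range_af_def cycle3_def by auto
qed (rule cycle3_no_full_range)

lemma stg_cycle3_mutual_mem: "S \<in> stg cycle3_mutual \<Longrightarrow> 1 \<in> S"
proof -
  assume stage: "S \<in> stg cycle3_mutual"
  have "range_af cycle3_mutual S = fst cycle3_mutual"
  proof (rule stg_range_full_if_stable_exists[of _ "{1}"])
    show "range_af cycle3_mutual {1} = fst cycle3_mutual"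
      unfolding range_af_def cycle3_mutual_def by auto
    show "is_AF cycle3_mutual"
      using cycle3_mutual_refines_cycle3 by blast
    show "conflict_free cycle3_mutual {1}"
      unfolding conflict_free_def cycle3_mutual_def by simp
  qed (rule stage)
  then have "1 \<in> range_af cycle3_mutual S" "2 \<in> range_af cycle3_mutual S"
    unfolding cycle3_mutual_def by auto
  then have "1 \<in> S \<or> 0 \<in> S" "1 \<in> S \<or> 2 \<in> S"
    unfolding range_af_def cycle3_mutual_def by auto
  moreover have "\<not> (0 \<in> S \<and> 2 \<in> S)"
    using stg_conflict_free[OF stage] unfolding conflict_free_def cycle3_mutual_def by auto
  ultimately show "1 \<in> S" by blast
qed

theorem theorem17:
  shows "\<not> skept_adequate le_cap (stg :: nat af \<Rightarrow> nat set set) \<and>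
         \<not> skept_adequate le_W (stg :: nat af \<Rightarrow> nat set set) \<and>
         \<not> skept_adequate le_cap (tfstg2 :: nat af \<Rightarrow> nat set set) \<and>
         \<not> skept_adequate le_W (tfstg2 :: nat af \<Rightarrow> nat set set) \<and>
         \<not> skept_adequate le_cap (stg15 :: nat af \<Rightarrow> nat set set) \<and>
         \<not> skept_adequate le_W (stg15 :: nat af \<Rightarrow> nat set set)"
proof -
  have not_adequate: "\<not> skept_adequate le_cap \<sigma> \<and> \<not> skept_adequate le_W \<sigma>"
    if "\<sigma> cycle3_mutual = stg cycle3_mutual" "\<sigma> cycle3 = stg cycle3"
    for \<sigma> :: "nat af \<Rightarrow> nat set set"
  proof -
    have "\<not> le_cap (\<sigma> cycle3_mutual) (\<sigma> cycle3) \<and> \<not> le_W (\<sigma> cycle3_mutual) (\<sigma> cycle3)"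
      unfolding that
      by (rule not_le_cap_not_le_W_if_separated[OF stg_cycle3_mutual_mem stg_cycle3]) auto
    then show ?thesis
      using not_skept_adequate_if_counterexample cycle3_mutual_refines_cycle3 by blast
  qed
  have nonempty: "fst cycle3_mutual \<noteq> {}" "fst cycle3 \<noteq> {}"
    unfolding cycle3_mutual_def cycle3_def by simp_all
  have "tfstg2 cycle3_mutual = stg cycle3_mutual" "stg15 cycle3_mutual = stg cycle3_mutual"
    using cycle3_mutual_refines_cycle3 strongly_connected_cycle3_mutual nonempty(1)
    by (simp_all add: tfstg2_strongly_connected stg15_strongly_connected)
  moreover have "tfstg2 cycle3 = stg cycle3" "stg15 cycle3 = stg cycle3"
    using cycle3_mutual_refines_cycle3 strongly_connected_cycle3 nonempty(2)
    by (simp_all add: tfstg2_strongly_connected stg15_strongly_connected)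
  ultimately show ?thesis
    using not_adequate[of stg] not_adequate[of tfstg2] not_adequate[of stg15] by simp
qed

end
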